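(* Let $f:\mathbb{R}^n\to\mathbb{R}$ be differentiable with $\nabla f$ $L$-Lipschitz continuous ($L>0$), let $\beta\in[0,1]$, $h=\frac{0.9}{L}$, and let $x\in\mathbb{R}^n$ with $\nabla f(x)\neq0$. Put $z=x-h\nabla f(x)$ and $$\alpha=\frac{(1-\beta)\left(1-\frac{Lh}{4}\right)\|x-z\|^2+\beta\langle x-z,h\nabla f(z)\rangle}{h^2\|\nabla f(x)-\beta(\nabla f(x)-\nabla f(z))\|^2}.$$ Then the denominator is nonzero and $\alpha>\frac12$; consequently $\eta:=1/\alpha\in(0,2)$ and $x-\eta\alpha h\big(\nabla f(x)-\beta(\nabla f(x)-\nabla f(z))\big)=x-h\big(\nabla f(x)-\beta(\nabla f(x)-\nabla f(z))\big)$. *)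

theory Defs
  imports "HOL-Analysis.Analysis"
begin

end

theory Submission
  imports Defs
begin

text \<open>
  Write \<open>g = \<nabla>f(x)\<close>, \<open>d = \<nabla>f(z) - \<nabla>f(x)\<close> and \<open>\<kappa> = L h\<close>. Lipschitz continuity of the
  gradient gives \<open>|d| \<le> \<kappa> |g|\<close>, so for \<open>\<kappa> < 1\<close> the direction \<open>g + \<beta> d\<close> is nonzero.
  After cancelling \<open>h\<^sup>2\<close>, the claim \<open>\<alpha> > 1/2\<close> reads
  \<open>|g + \<beta> d|\<^sup>2 < 2 ((1 - \<beta>) (1 - \<kappa>/4) |g|\<^sup>2 + \<beta> \<langle>g, g + d\<rangle>)\<close>; the cross terms
  \<open>2 \<beta> \<langle>g, d\<rangle>\<close> cancel and what remains is \<open>\<beta>\<^sup>2 |d|\<^sup>2 < (1 - (1 - \<beta>) \<kappa>/2) |g|\<^sup>2\<close>,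
  which follows from \<open>|d| \<le> \<kappa> |g|\<close> for every \<open>\<kappa> \<in> [0, 1)\<close>.
\<close>

lemma damping_coefficient_bound:
  fixes \<beta> \<kappa> :: real
  assumes "0 \<le> \<beta>" "\<beta> \<le> 1" "0 \<le> \<kappa>" "\<kappa> < 1"
  shows "\<beta>\<^sup>2 * \<kappa>\<^sup>2 < 1 - (1 - \<beta>) * \<kappa> / 2"
proof -
  have "\<beta> * \<kappa>\<^sup>2 \<le> \<kappa>\<^sup>2"
    using assms by (simp add: mult_left_le_one_le)
  also have "\<dots> \<le> \<kappa>"
    using assms by (simp add: power2_eq_square mult_left_le)
  finally have "\<beta> * \<kappa>\<^sup>2 \<le> \<kappa>" .
  then have "\<beta> * (1 - \<kappa>) \<le> \<beta> * (1 - \<beta> * \<kappa>\<^sup>2)"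
    using assms by (intro mult_left_mono) auto
  moreover have "(1 - \<beta>) * (1 - \<kappa>) \<le> (1 - \<beta>) * (1 - \<kappa> / 2)"
    using assms by (intro mult_left_mono) auto
  moreover have "1 - (1 - \<beta>) * \<kappa> / 2 - \<beta>\<^sup>2 * \<kappa>\<^sup>2 = (1 - \<beta>) * (1 - \<kappa> / 2) + \<beta> * (1 - \<beta> * \<kappa>\<^sup>2)"
    by (simp add: algebra_simps power2_eq_square)
  moreover have "(1 - \<beta>) * (1 - \<kappa>) + \<beta> * (1 - \<kappa>) = 1 - \<kappa>"
    by (simp add: algebra_simps)
  ultimately show ?thesis
    using assms by linarith
qed

lemma damped_direction_norm_sq_lt:
  fixes g w :: "'a::real_inner"
  assumes close: "norm (w - g) \<le> \<kappa> * norm g" and "0 \<le> \<kappa>" "\<kappa> < 1" "0 \<le> \<beta>" "\<beta> \<le> 1" "g \<noteq> 0"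
  shows "(norm (g - \<beta> *\<^sub>R (g - w)))\<^sup>2 < 2 * ((1 - \<beta>) * (1 - \<kappa> / 4) * (norm g)\<^sup>2 + \<beta> * (g \<bullet> w))"
proof -
  define d where "d = w - g"
  have expand: "(norm (g - \<beta> *\<^sub>R (g - w)))\<^sup>2 = (norm g)\<^sup>2 + 2 * \<beta> * (g \<bullet> d) + \<beta>\<^sup>2 * (norm d)\<^sup>2"
    unfolding d_def power2_norm_eq_inner
    by (simp add: inner_diff_left inner_diff_right inner_commute power2_eq_square algebra_simps)
  have gw: "g \<bullet> w = (norm g)\<^sup>2 + g \<bullet> d"
    by (simp add: d_def inner_diff_right power2_norm_eq_inner)
  have "(norm d)\<^sup>2 \<le> \<kappa>\<^sup>2 * (norm g)\<^sup>2"
    using power_mono[OF close[folded d_def] norm_ge_zero, of 2] by (simp add: power_mult_distrib)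
  then have "\<beta>\<^sup>2 * (norm d)\<^sup>2 \<le> (\<beta>\<^sup>2 * \<kappa>\<^sup>2) * (norm g)\<^sup>2"
    using mult_left_mono[of _ _ "\<beta>\<^sup>2"] by (simp add: mult.assoc)
  also have "\<dots> < (1 - (1 - \<beta>) * \<kappa> / 2) * (norm g)\<^sup>2"
    using damping_coefficient_bound assms by (simp add: mult_strict_right_mono)
  finally have "\<beta>\<^sup>2 * (norm d)\<^sup>2 < (1 - (1 - \<beta>) * \<kappa> / 2) * (norm g)\<^sup>2" .
  moreover have "2 * ((1 - \<beta>) * (1 - \<kappa> / 4) * (norm g)\<^sup>2 + \<beta> * ((norm g)\<^sup>2 + g \<bullet> d))
      = (norm g)\<^sup>2 + 2 * \<beta> * (g \<bullet> d) + (1 - (1 - \<beta>) * \<kappa> / 2) * (norm g)\<^sup>2"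
    by (simp add: field_simps)
  ultimately show ?thesis
    unfolding expand gw by linarith
qed

lemma damped_direction_nonzero:
  fixes g w :: "'a::real_normed_vector"
  assumes close: "norm (w - g) \<le> \<kappa> * norm g" and "0 \<le> \<kappa>" "\<kappa> < 1" "0 \<le> \<beta>" "\<beta> \<le> 1" "g \<noteq> 0"
  shows "g - \<beta> *\<^sub>R (g - w) \<noteq> 0"
proof -
  have "\<beta> * norm (w - g) \<le> \<beta> * (\<kappa> * norm g)"
    using close assms by (intro mult_left_mono)
  also have "\<dots> \<le> \<kappa> * norm g"
    using assms by (simp add: mult_left_le_one_le)
  also have "\<dots> < norm g"
    using assms by simp
  finally have "norm (\<beta> *\<^sub>R (w - g)) < norm g"
    using assms by simp
  then have "norm (g + \<beta> *\<^sub>R (w - g)) > 0"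
    using norm_diff_ineq[of g "\<beta> *\<^sub>R (w - g)"] by linarith
  then show ?thesis
    by (simp add: algebra_simps)
qed

lemma lipschitz_gradient_step:
  fixes grad :: "'a::real_normed_vector \<Rightarrow> 'a"
  assumes lip: "L-lipschitz_on UNIV grad" and "0 \<le> h"
  shows "norm (grad (x - h *\<^sub>R grad x) - grad x) \<le> L * h * norm (grad x)"
proof -
  have "dist (grad (x - h *\<^sub>R grad x)) (grad x) \<le> L * dist (x - h *\<^sub>R grad x) x"
    by (rule lipschitz_onD[OF lip]) simp_all
  then show ?thesis
    using \<open>0 \<le> h\<close> by (simp add: dist_norm mult.assoc)
qed

lemma damped_gradient_ratio_gt_half:
  fixes grad :: "'a::real_inner \<Rightarrow> 'a"
  assumes lip: "L-lipschitz_on UNIV grad" and h: "0 < h" "L * h < 1"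
    and \<beta>: "0 \<le> \<beta>" "\<beta> \<le> 1" and gx: "grad x \<noteq> 0"
    and z: "z = x - h *\<^sub>R grad x"
  shows "h\<^sup>2 * (norm (grad x - \<beta> *\<^sub>R (grad x - grad z)))\<^sup>2 > 0"
    and "((1 - \<beta>) * (1 - L * h / 4) * (norm (x - z))\<^sup>2 + \<beta> * ((x - z) \<bullet> (h *\<^sub>R grad z)))
           / (h\<^sup>2 * (norm (grad x - \<beta> *\<^sub>R (grad x - grad z)))\<^sup>2) > 1 / 2"
proof -
  let ?D = "h\<^sup>2 * (norm (grad x - \<beta> *\<^sub>R (grad x - grad z)))\<^sup>2"
  let ?N = "(1 - \<beta>) * (1 - L * h / 4) * (norm (x - z))\<^sup>2 + \<beta> * ((x - z) \<bullet> (h *\<^sub>R grad z))"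
  have close: "norm (grad z - grad x) \<le> L * h * norm (grad x)"
    using lipschitz_gradient_step[OF lip] h z by simp
  have "0 \<le> L * h"
    using lipschitz_on_nonneg[OF lip] h by simp
  note direction = close this h(2) \<beta> gx
  show "?D > 0"
    using damped_direction_nonzero[OF direction] h by simp
  have "?N = h\<^sup>2 * ((1 - \<beta>) * (1 - L * h / 4) * (norm (grad x))\<^sup>2 + \<beta> * (grad x \<bullet> grad z))"
    using h unfolding z by (simp add: power_mult_distrib power2_eq_square algebra_simps)
  moreover have "?D < h\<^sup>2 * (2 * ((1 - \<beta>) * (1 - L * h / 4) * (norm (grad x))\<^sup>2 + \<beta> * (grad x \<bullet> grad z)))"
    using damped_direction_norm_sq_lt[OF direction] h by simp
  ultimately show "?N / ?D > 1 / 2"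
    using \<open>?D > 0\<close> by (simp add: field_simps)
qed

theorem mainTheorem14:
  fixes f :: "real ^ 'n \<Rightarrow> real" and grad :: "real ^ 'n \<Rightarrow> real ^ 'n"
    and L \<beta> h \<alpha> \<eta> :: real and x z :: "real ^ 'n"
  assumes grad: "\<And>y. (f has_derivative (\<lambda>v. grad y \<bullet> v)) (at y)"
    and lip: "L-lipschitz_on UNIV grad"
    and Lpos: "L > 0"
    and beta: "0 \<le> \<beta>" "\<beta> \<le> 1"
    and h_def: "h = 0.9 / L"
    and gx: "grad x \<noteq> 0"
    and z_def: "z = x - h *\<^sub>R grad x"
    and alpha_def: "\<alpha> = ((1 - \<beta>) * (1 - L * h / 4) * (norm (x - z))\<^sup>2
                           + \<beta> * ((x - z) \<bullet> (h *\<^sub>R grad z)))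
                         / (h\<^sup>2 * (norm (grad x - \<beta> *\<^sub>R (grad x - grad z)))\<^sup>2)"
    and eta_def: "\<eta> = 1 / \<alpha>"
  shows "h\<^sup>2 * (norm (grad x - \<beta> *\<^sub>R (grad x - grad z)))\<^sup>2 \<noteq> 0
         \<and> \<alpha> > 1 / 2
         \<and> \<eta> \<in> {0<..<2}
         \<and> x - (\<eta> * \<alpha> * h) *\<^sub>R (grad x - \<beta> *\<^sub>R (grad x - grad z))
             = x - h *\<^sub>R (grad x - \<beta> *\<^sub>R (grad x - grad z))"
proof -
  have h: "0 < h" "L * h < 1"
    using Lpos h_def by simp_all
  note ratio = damped_gradient_ratio_gt_half[OF lip h beta gx z_def]
  have "\<alpha> > 1 / 2"
    using ratio(2) unfolding alpha_def .
  then have "\<eta> * \<alpha> = 1" and "\<eta> \<in> {0<..<2}"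
    unfolding eta_def by (auto simp: divide_less_eq)
  moreover have "h\<^sup>2 * (norm (grad x - \<beta> *\<^sub>R (grad x - grad z)))\<^sup>2 \<noteq> 0"
    using ratio(1) by linarith
  ultimately show ?thesis
    using \<open>\<alpha> > 1 / 2\<close> by simp
qed

end
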